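(* Let $a\in\mathbb{O}$ have norm one. The following are equivalent: (1) ${}^*\mathbb{O}_l(a,1)$ satisfies $(x^2,x^2,x^2)=0$; (2) ${}^*\mathbb{O}_r(a,1)$ satisfies $(x^2,x^2,x^2)=0$; (3) $a^2=\pm1$. Under these conditions ${}^*\mathbb{O}_l(a,1)$ and ${}^*\mathbb{O}_r(a,1)$ are isomorphic; moreover, if $a^2=-1$ then ${}^*\mathbb{O}_l(a,1)$ has degree four.
   Context: $\mathbb{O}$ is the real octonion algebra with conjugation $\bar x$. For norm-one $a$, ${}^*\mathbb{O}_l(a,1)$ and ${}^*\mathbb{O}_r(a,1)$ are the normed space of $\mathbb{O}$ with products $x\odot y=(\bar x a)y$ and $x\odot y=\bar x(ay)$ respectively. Here $x^2=x\odot x$ and $(x,y,z)=(x\odot y)\odot z-x\odot(y\odot z)$. The degree of a finite-dimensional algebra is the smallest $n$ such that every single-generated subalgebra has dimension $\le n$. *)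

theory Defs
  imports "HOL-Analysis.Analysis"
begin

text \<open>Real quaternions as pairs of complex numbers and real octonions as pairs of
quaternions, via the Cayley--Dickson doubling
  (a,b)(c,d) = (a c - conj(d) b, d a + b conj(c)),  conj(a,b) = (conj a, -b).
The product-type norm is the Euclidean norm on R^4 resp. R^8.\<close>

type_synonym quat = "complex \<times> complex"
type_synonym octonion = "quat \<times> quat"

definition qmul :: "quat \<Rightarrow> quat \<Rightarrow> quat" where
  "qmul x y = (fst x * fst y - cnj (snd y) * snd x, snd y * fst x + snd x * cnj (fst y))"

definition qconj :: "quat \<Rightarrow> quat" where
  "qconj x = (cnj (fst x), - snd x)"

definition omul :: "octonion \<Rightarrow> octonion \<Rightarrow> octonion" where
  "omul x y = (qmul (fst x) (fst y) - qmul (qconj (snd y)) (snd x),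
               qmul (snd y) (fst x) + qmul (snd x) (qconj (fst y)))"

definition oconj :: "octonion \<Rightarrow> octonion" where
  "oconj x = (qconj (fst x), - snd x)"

definition ounit :: octonion where
  "ounit = ((1, 0), (0, 0))"

text \<open>The products of *O_l(a,1) and *O_r(a,1).\<close>
definition lprod :: "octonion \<Rightarrow> octonion \<Rightarrow> octonion \<Rightarrow> octonion" where
  "lprod a x y = omul (omul (oconj x) a) y"

definition rprod :: "octonion \<Rightarrow> octonion \<Rightarrow> octonion \<Rightarrow> octonion" where
  "rprod a x y = omul (oconj x) (omul a y)"

definition assoc :: "('v \<Rightarrow> 'v \<Rightarrow> 'v::real_vector) \<Rightarrow> 'v \<Rightarrow> 'v \<Rightarrow> 'v \<Rightarrow> 'v" where
  "assoc m x y z = m (m x y) z - m x (m y z)"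

definition square_assoc_identity :: "('v \<Rightarrow> 'v \<Rightarrow> 'v::real_vector) \<Rightarrow> bool" where
  "square_assoc_identity m \<longleftrightarrow> (\<forall>x. assoc m (m x x) (m x x) (m x x) = 0)"

definition algebra_iso :: "('v::real_vector \<Rightarrow> 'v \<Rightarrow> 'v) \<Rightarrow> ('w::real_vector \<Rightarrow> 'w \<Rightarrow> 'w) \<Rightarrow> bool" where
  "algebra_iso m n \<longleftrightarrow> (\<exists>f. linear f \<and> bij f \<and> (\<forall>x y. f (m x y) = n (f x) (f y)))"

definition gen_subalgebra :: "('v::real_vector \<Rightarrow> 'v \<Rightarrow> 'v) \<Rightarrow> 'v \<Rightarrow> 'v set" where
  "gen_subalgebra m x = \<Inter>{S. subspace S \<and> (\<forall>u\<in>S. \<forall>v\<in>S. m u v \<in> S) \<and> x \<in> S}"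

definition algebra_degree :: "('v::euclidean_space \<Rightarrow> 'v \<Rightarrow> 'v) \<Rightarrow> nat" where
  "algebra_degree m = (LEAST n. \<forall>x. dim (gen_subalgebra m x) \<le> n)"

end

theory Submission
  imports Defs
begin

(* Both products agree on the diagonal, and for a unit imaginary e orthogonal to a one has
   e * e = conj a. Evaluating (x^2, x^2, x^2) = 0 at x = e in either algebra therefore gives
   conj a = a^3, which for |a| = 1 forces a^2 = 1 or a^2 = -1. If a = 1 or a = -1 the two
   products coincide and squares are real. If a^2 = -1 then a is imaginary, so is every
   square y, and the identity reduces to the right Moufang identity
   (((y a) y) a) y = (y a) (y (a y)); moreover x \<mapsto> -(a x) a is an isomorphism by the middle
   Moufang identity. For the degree, the subalgebra generated by x lies in the quaternion
   algebra spanned by 1, a, x, a x, while x = 1 + e generates all of span {1, e, a, a e}. *)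

lemma algebra_iso_refl: "algebra_iso m m"
  unfolding algebra_iso_def by (intro exI[of _ id]) (auto simp: linear_id)

lemma square_assoc_identity_algebra_iso:
  assumes "algebra_iso m n" and "square_assoc_identity m"
  shows "square_assoc_identity n"
  unfolding square_assoc_identity_def
proof
  fix y
  obtain f where f: "linear f" "bij f" "\<And>x y. f (m x y) = n (f x) (f y)"
    using assms(1) unfolding algebra_iso_def by blast
  obtain x where "y = f x" using bij_is_surj[OF f(2)] by (metis surj_def)
  then have "assoc n (n y y) (n y y) (n y y) = f (assoc m (m x x) (m x x) (m x x))"
    by (simp add: assoc_def f(3) linear_diff[OF f(1)])
  also have "\<dots> = 0"
    using assms(2) linear_0[OF f(1)] unfolding square_assoc_identity_def by simp
  finally show "assoc n (n y y) (n y y) (n y y) = 0" .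
qed

lemma linear_image_span_subset:
  assumes "linear g" and "g ` B \<subseteq> span C"
  shows "g ` span B \<subseteq> span C"
  by (metis assms span_linear_image span_mono span_span)

lemma bilinear_span_closed:
  assumes "bilinear f" and "\<And>x y. x \<in> B \<Longrightarrow> y \<in> B \<Longrightarrow> f x y \<in> span B"
    and "u \<in> span B" and "v \<in> span B"
  shows "f u v \<in> span B"
proof -
  have "f x v \<in> span B" if "x \<in> B" for x
    using linear_image_span_subset[of "f x" B B] assms(1,2,4) that
    unfolding bilinear_def by blast
  then show ?thesis
    using linear_image_span_subset[of "\<lambda>x. f x v" B B] assms(1,3)
    unfolding bilinear_def by blast
qed

lemma octonion_eq_iff: "(x::octonion) = y \<longleftrightarrow>
  Re (fst (fst x)) = Re (fst (fst y)) \<and> Im (fst (fst x)) = Im (fst (fst y)) \<and>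
  Re (snd (fst x)) = Re (snd (fst y)) \<and> Im (snd (fst x)) = Im (snd (fst y)) \<and>
  Re (fst (snd x)) = Re (fst (snd y)) \<and> Im (fst (snd x)) = Im (fst (snd y)) \<and>
  Re (snd (snd x)) = Re (snd (snd y)) \<and> Im (snd (snd x)) = Im (snd (snd y))"
  by (auto simp: prod_eq_iff complex_eq_iff)

lemma inner_octonion: "inner (x::octonion) y =
  Re (fst (fst x)) * Re (fst (fst y)) + Im (fst (fst x)) * Im (fst (fst y)) +
  Re (snd (fst x)) * Re (snd (fst y)) + Im (snd (fst x)) * Im (snd (fst y)) +
  Re (fst (snd x)) * Re (fst (snd y)) + Im (fst (snd x)) * Im (fst (snd y)) +
  Re (snd (snd x)) * Re (snd (snd y)) + Im (snd (snd x)) * Im (snd (snd y))"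
  by (cases x; cases y) (auto simp: inner_complex_def)

lemma power2_norm_octonion: "(norm (x::octonion))\<^sup>2 =
  Re (fst (fst x)) * Re (fst (fst x)) + Im (fst (fst x)) * Im (fst (fst x)) +
  Re (snd (fst x)) * Re (snd (fst x)) + Im (snd (fst x)) * Im (snd (fst x)) +
  Re (fst (snd x)) * Re (fst (snd x)) + Im (fst (snd x)) * Im (fst (snd x)) +
  Re (snd (snd x)) * Re (snd (snd x)) + Im (snd (snd x)) * Im (snd (snd x))"
  by (simp flip: dot_square_norm add: inner_octonion)

definition ore :: "octonion \<Rightarrow> real" where
  "ore x = Re (fst (fst x))"

lemmas octonion_coords = octonion_eq_iff inner_octonion power2_norm_octonion ore_def
  omul_def qmul_def oconj_def qconj_def ounit_def

lemma octonion_linear_simps: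
  "omul (x + y) z = omul x z + omul y z" "omul z (x + y) = omul z x + omul z y"
  "omul (x - y) z = omul x z - omul y z" "omul z (x - y) = omul z x - omul z y"
  "omul (- x) z = - omul x z" "omul z (- x) = - omul z x"
  "omul (c *\<^sub>R x) z = c *\<^sub>R omul x z" "omul z (c *\<^sub>R x) = c *\<^sub>R omul z x"
  "omul 0 z = 0" "omul z 0 = 0" "omul ounit z = z" "omul z ounit = z"
  "oconj (x + y) = oconj x + oconj y" "oconj (x - y) = oconj x - oconj y"
  "oconj (- x) = - oconj x" "oconj (c *\<^sub>R x) = c *\<^sub>R oconj x"
  "oconj 0 = 0" "oconj ounit = ounit" "oconj (oconj x) = x"
  "ore (x + y) = ore x + ore y" "ore (c *\<^sub>R x) = c * ore x" "ore (- x) = - ore x"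
  "ore ounit = 1"
  unfolding octonion_coords by (simp_all add: algebra_simps)

lemma bilinear_omul: "bilinear omul"
  unfolding bilinear_def by (intro allI conjI linearI) (simp_all add: octonion_linear_simps)

lemma linear_oconj: "linear oconj"
  by (rule linearI) (simp_all add: octonion_linear_simps)

lemma ounit_neq_zero: "ounit \<noteq> 0"
  by (simp add: ounit_def zero_prod_def)

lemma inner_ounit: "inner ounit x = ore x"
  unfolding octonion_coords by simp

lemma oconj_eq: "oconj x = (2 * ore x) *\<^sub>R ounit - x"
  unfolding octonion_coords by simp

lemma oconj_omul: "oconj (omul x y) = omul (oconj y) (oconj x)"
  unfolding octonion_coords by (simp; (intro conjI)?; algebra)

lemma omul_oconj_self: "omul (oconj x) x = (norm x)\<^sup>2 *\<^sub>R ounit"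
  unfolding octonion_coords by (simp; (intro conjI)?; algebra)

lemma omul_self_oconj: "omul x (oconj x) = (norm x)\<^sup>2 *\<^sub>R ounit"
  unfolding octonion_coords by (simp; (intro conjI)?; algebra)

lemma omul_self: "omul x x = (2 * ore x) *\<^sub>R x - (norm x)\<^sup>2 *\<^sub>R ounit"
  unfolding octonion_coords by (simp; (intro conjI)?; algebra)

lemma omul_flexible: "omul (omul x y) x = omul x (omul y x)"
  unfolding octonion_coords by (simp; (intro conjI)?; algebra)

lemma omul_left_alternative: "omul x (omul x y) = omul (omul x x) y"
  unfolding octonion_coords by (simp; (intro conjI)?; algebra)

lemma omul_right_alternative: "omul (omul y x) x = omul y (omul x x)"
  unfolding octonion_coords by (simp; (intro conjI)?; algebra)

lemma omul_middle_moufang: "omul (omul x y) (omul z x) = omul (omul x (omul y z)) x"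
  unfolding octonion_coords by (simp; (intro conjI)?; algebra)

lemma omul_right_moufang: "omul (omul (omul z x) w) x = omul z (omul x (omul w x))"
  unfolding octonion_coords by (simp; (intro conjI)?; algebra)

lemma lprod_self_eq_rprod_self: "lprod a x x = rprod a x x"
  unfolding lprod_def rprod_def by (simp add: oconj_eq octonion_linear_simps omul_flexible)

lemma omul_imaginary_sandwich:
  assumes "ore e = 0"
  shows "omul (omul e a) e = - ((norm e)\<^sup>2 *\<^sub>R oconj a) - (2 * inner e a) *\<^sub>R e"
  unfolding octonion_coords by (simp add: assms[unfolded ore_def]; (intro conjI)?; algebra)

lemma lprod_unit_imaginary_orthogonal:
  assumes "ore e = 0" "inner e a = 0" "norm e = 1"
  shows "lprod a e e = oconj a"
proof -
  have "oconj e = - e" using oconj_eq[of e] assms(1) by simp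
  then show ?thesis
    using omul_imaginary_sandwich[OF assms(1), of a] assms(2,3)
    by (simp add: lprod_def octonion_linear_simps)
qed

lemma exists_unit_imaginary_orthogonal: "\<exists>e. ore e = 0 \<and> inner e a = 0 \<and> norm e = 1"
proof -
  \<comment> \<open>a nonzero vector of the plane spanned by the units i and j, orthogonal to
      the component of a in that plane\<close>
  define e :: octonion where "e =
    (if Im (fst (fst a)) = 0 \<and> Re (snd (fst a)) = 0 then ((\<i>, 0), (0, 0))
     else ((Complex 0 (- Re (snd (fst a))), Complex (Im (fst (fst a))) 0), (0, 0)))"
  have "ore e = 0" "inner e a = 0" "e \<noteq> 0"
    unfolding e_def octonion_coords by (auto simp: algebra_simps)
  then show ?thesis
    by (intro exI[of _ "e /\<^sub>R norm e"]) (simp add: octonion_linear_simps)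
qed

lemma assoc_lprod_oconj:
  assumes "norm a = 1"
  shows "assoc (lprod a) (oconj a) (oconj a) (oconj a) = oconj a - omul (omul a a) a"
proof -
  have "lprod a (oconj a) (oconj a) = a"
    using omul_left_alternative[of a "oconj a"]
    by (simp add: lprod_def omul_self_oconj assms octonion_linear_simps)
  moreover have "lprod a a (oconj a) = oconj a"
    by (simp add: lprod_def omul_oconj_self assms octonion_linear_simps)
  ultimately show ?thesis by (simp add: assoc_def lprod_def octonion_linear_simps)
qed

lemma assoc_rprod_oconj:
  assumes "norm a = 1"
  shows "assoc (rprod a) (oconj a) (oconj a) (oconj a) = oconj a - omul (omul a a) a"
proof -
  have "rprod a (oconj a) (oconj a) = a"
    by (simp add: rprod_def omul_self_oconj assms octonion_linear_simps)
  moreover have "rprod a a (oconj a) = oconj a"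
    by (simp add: rprod_def omul_self_oconj assms octonion_linear_simps)
  ultimately show ?thesis
    by (simp add: assoc_def rprod_def octonion_linear_simps omul_left_alternative)
qed

lemma oconj_eq_cube_if_square_assoc_identity:
  assumes "norm a = 1"
    and "square_assoc_identity (lprod a) \<or> square_assoc_identity (rprod a)"
  shows "oconj a = omul (omul a a) a"
proof -
  obtain e where "ore e = 0" "inner e a = 0" "norm e = 1"
    using exists_unit_imaginary_orthogonal by blast
  then have "lprod a e e = oconj a" "rprod a e e = oconj a"
    using lprod_unit_imaginary_orthogonal lprod_self_eq_rprod_self by metis+
  then have "assoc (lprod a) (oconj a) (oconj a) (oconj a) = 0
           \<or> assoc (rprod a) (oconj a) (oconj a) (oconj a) = 0"
    using assms(2) unfolding square_assoc_identity_def by metis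
  then show ?thesis using assoc_lprod_oconj assoc_rprod_oconj assms(1) by auto
qed

lemma square_eq_pm_ounit_if_oconj_eq_cube:
  assumes "norm a = 1" and "oconj a = omul (omul a a) a"
  shows "omul a a = ounit \<or> omul a a = - ounit"
proof -
  define r where "r = ore a"
  have square: "omul a a = (2 * r) *\<^sub>R a - ounit"
    using omul_self[of a] assms(1) by (simp add: r_def)
  have "omul (omul a a) a = omul ((2 * r) *\<^sub>R a - ounit) a"
    by (simp only: square)
  also have "\<dots> = (2 * r) *\<^sub>R omul a a - a"
    by (simp add: octonion_linear_simps)
  finally have "omul (omul a a) a = (2 * r) *\<^sub>R omul a a - a" .
  with assms(2) have "(2 * r) *\<^sub>R ounit = (2 * r) *\<^sub>R omul a a"
    by (simp add: oconj_eq r_def)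
  then have "r = 0 \<or> omul a a = ounit" by auto
  then show ?thesis using square by auto
qed

lemma real_if_square_eq_ounit:
  assumes "norm a = 1" and "omul a a = ounit"
  shows "a = ore a *\<^sub>R ounit"
proof -
  define r where "r = ore a"
  have "(2 * r) *\<^sub>R a - ounit = ounit"
    using omul_self[of a] assms by (simp add: r_def)
  then have "(2 * r) *\<^sub>R a = 2 *\<^sub>R ounit"
    by (simp add: scaleR_2 diff_eq_eq)
  then have ra: "r *\<^sub>R a = ounit"
    by (metis scaleR_scaleR scaleR_cancel_left zero_neq_numeral)
  from arg_cong[OF ra, of ore] have "r * r = 1"
    by (simp add: octonion_linear_simps r_def)
  then have "a = r *\<^sub>R (r *\<^sub>R a)" by simp
  then have "a = r *\<^sub>R ounit" by (simp only: ra)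
  then show ?thesis by (simp add: r_def)
qed

lemma imaginary_if_square_eq_minus_ounit:
  assumes "norm a = 1" and "omul a a = - ounit"
  shows "ore a = 0"
proof -
  have "ore a *\<^sub>R a = 0"
    using omul_self[of a] assms by simp
  moreover have "a \<noteq> 0" using assms(1) by auto
  ultimately show ?thesis by simp
qed

lemma lprod_real_eq_rprod: "lprod (s *\<^sub>R ounit) = rprod (s *\<^sub>R ounit)"
  by (intro ext) (simp add: lprod_def rprod_def octonion_linear_simps)

lemma square_assoc_identity_lprod_real: "square_assoc_identity (lprod (s *\<^sub>R ounit))"
  unfolding square_assoc_identity_def assoc_def lprod_def
  by (simp add: octonion_linear_simps omul_oconj_self)

lemma square_assoc_identity_lprod_imaginary:
  assumes "oconj a = - a"
  shows "square_assoc_identity (lprod a)"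
  unfolding square_assoc_identity_def
proof
  fix x
  define y where "y = lprod a x x"
  have y_imaginary: "oconj y = - y"
    using lprod_self_eq_rprod_self[of a x]
    unfolding y_def lprod_def rprod_def by (simp add: oconj_omul octonion_linear_simps assms)
  then have yy: "lprod a y y = - omul (omul y a) y"
    by (simp add: lprod_def octonion_linear_simps)
  then have "oconj (lprod a y y) = omul (omul y a) y"
    by (simp add: oconj_omul octonion_linear_simps y_imaginary assms omul_flexible)
  then have "assoc (lprod a) y y y
      = omul (omul (omul (omul y a) y) a) y - omul (omul y a) (omul (omul y a) y)"
    by (simp add: assoc_def lprod_def y_imaginary yy octonion_linear_simps)
  also have "\<dots> = 0" by (metis omul_right_moufang omul_flexible diff_self)
  finally show "assoc (lprod a) (lprod a x x) (lprod a x x) (lprod a x x) = 0"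
    by (simp add: y_def)
qed

lemma algebra_iso_lprod_rprod_imaginary:
  assumes "oconj a = - a" and "norm a = 1"
  shows "algebra_iso (lprod a) (rprod a)"
proof -
  have aa: "omul a a = - ounit"
    using omul_oconj_self[of a] assms by (simp add: octonion_linear_simps minus_equation_iff)
  have a_cancel: "omul a (omul (omul a y) a) = - omul y a" for y
    by (simp add: omul_flexible omul_left_alternative aa octonion_linear_simps)
  define f where "f x = - omul (omul a x) a" for x
  have "linear f"
    by (rule linearI) (simp_all add: f_def octonion_linear_simps)
  moreover have "bij f"
    by (rule o_bij[of f])
      (auto simp: f_def a_cancel omul_right_alternative aa octonion_linear_simps)
  moreover have "f (lprod a x y) = rprod a (f x) (f y)" for x y
  proof -
    have "rprod a (f x) (f y) = - omul (omul a (omul (oconj x) a)) (omul y a)"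
      by (simp add: rprod_def f_def a_cancel oconj_omul assms(1) octonion_linear_simps)
    also have "\<dots> = f (lprod a x y)"
      by (simp add: f_def lprod_def omul_middle_moufang)
    finally show ?thesis by simp
  qed
  ultimately show ?thesis unfolding algebra_iso_def by blast
qed

lemma imaginary_quaternion_products:
  assumes "ore a = 0"
  shows "omul x a = (2 * ore x) *\<^sub>R a - omul a x - (2 * inner a x) *\<^sub>R ounit"
    and "omul a (omul a x) = - ((norm a)\<^sup>2 *\<^sub>R x)"
    and "omul x (omul a x) = (norm x)\<^sup>2 *\<^sub>R a - (2 * inner a x) *\<^sub>R x"
    and "omul (omul a x) a = (norm a)\<^sup>2 *\<^sub>R x - (2 * ore x * (norm a)\<^sup>2) *\<^sub>R ounit
                              - (2 * inner a x) *\<^sub>R a"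
    and "omul (omul a x) x = (2 * ore x) *\<^sub>R omul a x - (norm x)\<^sup>2 *\<^sub>R a"
    and "omul (omul a x) (omul a x) =
           - (((norm a)\<^sup>2 * (norm x)\<^sup>2) *\<^sub>R ounit) - (2 * inner a x) *\<^sub>R omul a x"
    and "oconj (omul a x) = - omul a x - (2 * inner a x) *\<^sub>R ounit"
  unfolding octonion_coords
  by (simp_all add: assms[unfolded ore_def]; (intro conjI)?; algebra)+

lemma quaternion_span_closed:
  assumes "ore a = 0"
    and "u \<in> span {ounit, a, x, omul a x}" and "v \<in> span {ounit, a, x, omul a x}"
  shows "omul u v \<in> span {ounit, a, x, omul a x}"
    and "oconj u \<in> span {ounit, a, x, omul a x}"
proof -
  note span_rules = span_add span_diff span_scale span_neg span_base
  show "omul u v \<in> span {ounit, a, x, omul a x}"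
  proof (rule bilinear_span_closed[OF bilinear_omul _ assms(2,3)])
    fix y z assume "y \<in> {ounit, a, x, omul a x}" "z \<in> {ounit, a, x, omul a x}"
    then show "omul y z \<in> span {ounit, a, x, omul a x}"
      using assms(1)
      by (elim insertE emptyE; simp add: imaginary_quaternion_products omul_self[of a]
          omul_self[of x] octonion_linear_simps; intro span_rules; simp)
  qed
  show "oconj u \<in> span {ounit, a, x, omul a x}"
  proof -
    have "oconj y \<in> span {ounit, a, x, omul a x}" if "y \<in> {ounit, a, x, omul a x}" for y
      using that assms(1)
      by (elim insertE emptyE; simp add: imaginary_quaternion_products oconj_eq[of a]
          oconj_eq[of x] octonion_linear_simps; intro span_rules; simp)
    then show ?thesis
      using linear_image_span_subset[OF linear_oconj, of "{ounit, a, x, omul a x}"] assms(2)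
      by blast
  qed
qed

lemma dim_gen_subalgebra_lprod_imaginary_le:
  assumes "ore a = 0"
  shows "dim (gen_subalgebra (lprod a) x) \<le> 4"
proof -
  have "gen_subalgebra (lprod a) x \<subseteq> span {ounit, a, x, omul a x}"
    unfolding gen_subalgebra_def
    by (rule Inter_lower)
      (simp add: subspace_span span_base lprod_def quaternion_span_closed assms)
  then have "dim (gen_subalgebra (lprod a) x) \<le> card {ounit, a, x, omul a x}"
    by (rule dim_le_card) simp
  also have "\<dots> \<le> 4" by (simp add: card_insert_if)
  finally show ?thesis .
qed

lemma ore_omul_imaginary:
  assumes "ore a = 0" "ore e = 0"
  shows "ore (omul a e) = - inner a e"
  unfolding octonion_coords by (simp add: assms[unfolded ore_def]; algebra)

lemma inner_omul_imaginary_left: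
  assumes "ore a = 0"
  shows "inner e (omul a e) = 0"
  unfolding octonion_coords by (simp add: assms[unfolded ore_def]; algebra)

lemma inner_omul_imaginary_right:
  assumes "ore e = 0"
  shows "inner a (omul a e) = 0"
  unfolding octonion_coords by (simp add: assms[unfolded ore_def]; algebra)

lemma quaternion_frame_independent:
  assumes "ore a = 0" "ore e = 0" "inner e a = 0" "norm a = 1" "norm e = 1"
  shows "independent {ounit, e, a, omul a e}" and "card {ounit, e, a, omul a e} = 4"
proof -
  have "omul (omul a e) e = - a"
    using omul_self[of e] assms(2,5) by (simp add: omul_right_alternative octonion_linear_simps)
  then have nonzero: "ounit \<noteq> 0" "e \<noteq> 0" "a \<noteq> 0" "omul a e \<noteq> 0"
    using assms(4,5) by (auto simp: octonion_linear_simps ounit_neq_zero)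
  have orth: "inner ounit e = 0" "inner ounit a = 0" "inner ounit (omul a e) = 0"
    "inner e a = 0" "inner e (omul a e) = 0" "inner a (omul a e) = 0"
    using assms(1-3) by (simp_all add: inner_ounit ore_omul_imaginary inner_commute
        inner_omul_imaginary_left inner_omul_imaginary_right)
  then have "pairwise orthogonal {ounit, e, a, omul a e}"
    by (auto simp: pairwise_insert orthogonal_def inner_commute)
  then show "independent {ounit, e, a, omul a e}"
    by (rule pairwise_orthogonal_independent) (use nonzero in auto)
  have "ounit \<noteq> e" "ounit \<noteq> a" "ounit \<noteq> omul a e" "e \<noteq> a" "e \<noteq> omul a e" "a \<noteq> omul a e"
    using orth nonzero by (metis inner_eq_zero_iff)+
  then show "card {ounit, e, a, omul a e} = 4" by simp
qed

lemma dim_gen_subalgebra_lprod_imaginary_ge: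
  assumes "ore a = 0" "norm a = 1"
  shows "\<exists>x. 4 \<le> dim (gen_subalgebra (lprod a) x)"
proof -
  obtain e where e: "ore e = 0" "inner e a = 0" "norm e = 1"
    using exists_unit_imaginary_orthogonal by blast
  note products = imaginary_quaternion_products[OF assms(1), of e]
  have frame: "oconj e = - e" "omul e e = - ounit" "omul e a = - omul a e"
    "oconj (omul a e) = - omul a e" "omul (omul a e) a = e" "omul (omul a e) e = - a"
    "omul e (omul a e) = a"
    using products oconj_eq[of e] omul_self[of e] e assms(2) by (simp_all add: inner_commute)
  define G where "G = gen_subalgebra (lprod a) (ounit + e)"
  have "subspace G"
    unfolding G_def gen_subalgebra_def by (rule subspace_Inter) blast
  have closed: "lprod a u v \<in> G" if "u \<in> G" "v \<in> G" for u v
    using that unfolding G_def gen_subalgebra_def by blast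
  have gen: "ounit + e \<in> G" unfolding G_def gen_subalgebra_def by blast
  have "lprod a (ounit + e) (ounit + e) = 2 *\<^sub>R omul a e"
    by (simp add: lprod_def frame octonion_linear_simps scaleR_2)
  then have ae: "omul a e \<in> G"
    using closed[OF gen gen] subspace_scale[OF \<open>subspace G\<close>, of _ "1/2"] by fastforce
  have "lprod a (omul a e) (ounit + e) = ounit - e"
    by (simp add: lprod_def frame octonion_linear_simps)
  then have "ounit - e \<in> G" using closed[OF ae gen] by simp
  moreover have "ounit = (1/2) *\<^sub>R ((ounit + e) + (ounit - e))"
    and "e = (1/2) *\<^sub>R ((ounit + e) - (ounit - e))"
    by (simp_all add: algebra_simps flip: scaleR_2)
  ultimately have "ounit \<in> G" "e \<in> G"
    using gen subspace_add[OF \<open>subspace G\<close>] subspace_diff[OF \<open>subspace G\<close>]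
      subspace_scale[OF \<open>subspace G\<close>] by metis+
  moreover have "lprod a (omul a e) (omul a e) = - a"
    by (simp add: lprod_def frame octonion_linear_simps)
  then have "a \<in> G" using closed[OF ae ae] subspace_neg[OF \<open>subspace G\<close>] by fastforce
  ultimately have "{ounit, e, a, omul a e} \<subseteq> G" using ae by blast
  then have "card {ounit, e, a, omul a e} \<le> dim G"
    using quaternion_frame_independent(1)[OF assms(1) e(1,2) assms(2) e(3)]
    by (rule independent_card_le_dim)
  then have "4 \<le> dim G"
    using quaternion_frame_independent(2)[OF assms(1) e(1,2) assms(2) e(3)] by simp
  then show ?thesis unfolding G_def by blast
qed

lemma algebra_degree_lprod_imaginary:
  assumes "ore a = 0" and "norm a = 1"
  shows "algebra_degree (lprod a) = 4"
  unfolding algebra_degree_def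
proof (rule Least_equality)
  show "\<forall>x. dim (gen_subalgebra (lprod a) x) \<le> 4"
    using dim_gen_subalgebra_lprod_imaginary_le[OF assms(1)] by blast
next
  fix n assume "\<forall>x. dim (gen_subalgebra (lprod a) x) \<le> n"
  then show "4 \<le> n"
    using dim_gen_subalgebra_lprod_imaginary_ge[OF assms] order_trans by blast
qed

theorem proposition5:
  fixes a :: octonion
  assumes "norm a = 1"
  shows "(square_assoc_identity (lprod a) \<longleftrightarrow> square_assoc_identity (rprod a))
       \<and> (square_assoc_identity (rprod a) \<longleftrightarrow> (omul a a = ounit \<or> omul a a = - ounit))
       \<and> ((omul a a = ounit \<or> omul a a = - ounit) \<longrightarrow> algebra_iso (lprod a) (rprod a))
       \<and> (omul a a = - ounit \<longrightarrow> algebra_degree (lprod a) = 4)"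
proof -
  let ?square_pm1 = "omul a a = ounit \<or> omul a a = - ounit"
  have "?square_pm1" if "square_assoc_identity (lprod a) \<or> square_assoc_identity (rprod a)"
    using oconj_eq_cube_if_square_assoc_identity[OF assms that]
      square_eq_pm_ounit_if_oconj_eq_cube[OF assms] by blast
  moreover have "square_assoc_identity (lprod a) \<and> algebra_iso (lprod a) (rprod a)"
    if ?square_pm1
  proof (cases "omul a a = ounit")
    case True
    then have "a = ore a *\<^sub>R ounit" by (rule real_if_square_eq_ounit[OF assms])
    then show ?thesis
      using square_assoc_identity_lprod_real lprod_real_eq_rprod algebra_iso_refl by metis
  next
    case False
    with that have "ore a = 0" using imaginary_if_square_eq_minus_ounit[OF assms] by blast
    then have "oconj a = - a" by (simp add: oconj_eq)
    then show ?thesis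
      using square_assoc_identity_lprod_imaginary algebra_iso_lprod_rprod_imaginary assms
      by blast
  qed
  moreover have "omul a a = - ounit \<longrightarrow> algebra_degree (lprod a) = 4"
    using imaginary_if_square_eq_minus_ounit algebra_degree_lprod_imaginary assms by blast
  ultimately show ?thesis using square_assoc_identity_algebra_iso by blast
qed

end
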